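(* Let $\mathbf{G}=(\mathcal{V},\mathcal{E})$ be a directed graph on $\mathcal{V}=\{1,\dots,m\}$, let $a>0$, and let $\{r_{ij}\}_{(i,j)\in\mathcal{E}}$ be independent random variables, each uniform on $[0,ma)$. Define $t_i=\mathrm{mod}\big(\sum_{j:(j,i)\in\mathcal{E}} r_{ji}-\sum_{j:(i,j)\in\mathcal{E}} r_{ij},\,ma\big)$ for $i\in\mathcal{V}$. If the undirected graph $\bar{\mathbf{G}}$ is connected, then the vector $\mathbf{t}=(t_1,\dots,t_m)$ is uniformly distributed over the set of points of $[0,ma)^m$ satisfying $\mathrm{mod}\big(\sum_{i=1}^m t_i, ma\big)=0$.
   Context: $\bar{\mathbf{G}}$ is the undirected graph on $\mathcal{V}$ obtained from $\mathbf{G}$ by ignoring edge orientations. For $a'>0$ and real $y$, $\mathrm{mod}(y,a')=y-pa'$ where $p$ is the unique integer with $y-pa'\in[0,a')$; equivalently $\mathbf{t}=\mathrm{mod}(B\mathbf{r},ma)$ entrywise, with $B$ the incidence matrix of $\mathbf{G}$ and $\mathbf{r}$ the vector of the $r_{ij}$. *)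

theory Defs
  imports "HOL-Probability.Probability"
begin

definition rmod :: "real \<Rightarrow> real \<Rightarrow> real" where
  "rmod y a' = y - of_int \<lfloor>y / a'\<rfloor> * a'"

definition undirected_connected :: "nat set \<Rightarrow> (nat \<times> nat) set \<Rightarrow> bool" where
  "undirected_connected V E \<longleftrightarrow> (\<forall>i\<in>V. \<forall>j\<in>V. (i, j) \<in> (E \<union> E\<inverse>)\<^sup>*)"

definition tvec :: "(nat \<times> nat) set \<Rightarrow> real \<Rightarrow> (nat \<times> nat \<Rightarrow> real) \<Rightarrow> nat \<Rightarrow> real" where
  "tvec E c r i = rmod ((\<Sum>j\<in>{j. (j, i) \<in> E}. r (j, i)) - (\<Sum>j\<in>{j. (i, j) \<in> E}. r (i, j))) c"

text \<open>Uniform distribution on the set {x \<in> [0,c)^m. mod(sum x, c) = 0}, a subset of R^m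
  (coordinates indexed by {1..m}): the natural (normalised surface) measure on this set, realised
  as the image of the uniform distribution on [0,c)^(m-1) under the bijection
  (x_1,...,x_{m-1}) \<mapsto> (x_1,...,x_{m-1}, mod(-(x_1+...+x_{m-1}), c)).\<close>
definition zero_sum_uniform :: "nat \<Rightarrow> real \<Rightarrow> (nat \<Rightarrow> real) measure" where
  "zero_sum_uniform m c =
     distr (PiM {1..<m} (\<lambda>_. uniform_measure lborel {0..<c})) (PiM {1..m} (\<lambda>_. borel))
       (\<lambda>x. \<lambda>i\<in>{1..m}. if i < m then x i else rmod (- (\<Sum>j\<in>{1..<m}. x j)) c)"

end

theory Submission
  imports Defs
begin

text \<open>Write \<open>d\<^sub>i(x)\<close> for the net inflow at vertex \<open>i\<close> of the edge values \<open>x\<close>, so that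
  \<open>t\<^sub>i = mod(d\<^sub>i(x), c)\<close> with \<open>c = m a\<close>. The \<open>d\<^sub>i\<close> sum to zero, hence \<open>t\<^sub>m\<close> is determined by the
  \<open>t\<^sub>i\<close> with \<open>i < m\<close>, and it suffices to show that these are independent and uniform on
  \<open>[0, c)\<close>. By connectivity, every nonempty set of vertices avoiding \<open>m\<close> is left by an edge.
  We induct on such a vertex set \<open>S\<close>: choose an edge \<open>e\<close> joining some \<open>v \<in> S\<close> to a vertex outside
  \<open>S\<close>. The \<open>t\<^sub>w\<close> with \<open>w \<in> S - {v}\<close> do not involve \<open>x\<^sub>e\<close>, and for fixed values of the other
  edges \<open>t\<^sub>v = mod(\<plusminus>x\<^sub>e + const, c)\<close>. Translations and reflections modulo \<open>c\<close> preserve the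
  uniform distribution on \<open>[0, c)\<close>, so \<open>t\<^sub>v\<close> is uniform and independent of the remaining
  \<open>t\<^sub>w\<close>, which are independent and uniform by induction.\<close>

lemma borel_measurable_rmod [measurable]:
  "f \<in> borel_measurable M \<Longrightarrow> (\<lambda>x. rmod (f x) c) \<in> borel_measurable M"
proof -
  assume f: "f \<in> borel_measurable M"
  then have "(\<lambda>x. f x / c) \<in> borel_measurable M"
    by simp
  then have "(\<lambda>x. real_of_int \<lfloor>f x / c\<rfloor>) \<in> borel_measurable M"
    by (rule measurable_compose[OF _ borel_measurable_real_floor])
  with f show ?thesis
    unfolding rmod_def by measurable
qed

lemma rmod_bounds:
  assumes "c > 0"
  shows "0 \<le> rmod y c" "rmod y c < c"
proof -
  have "of_int \<lfloor>y / c\<rfloor> * c \<le> y" "y < (of_int \<lfloor>y / c\<rfloor> + 1) * c"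
    using assms by (simp_all add: pos_le_divide_eq[symmetric] pos_divide_less_eq[symmetric])
  then show "0 \<le> rmod y c" "rmod y c < c"
    by (simp_all add: rmod_def algebra_simps)
qed

lemma rmod_eqI:
  assumes "0 \<le> z" "z < c" "y = z + of_int k * c"
  shows "rmod y c = z"
proof -
  have "\<lfloor>y / c\<rfloor> = k"
    using assms by (intro floor_unique) (simp_all add: field_simps)
  then show ?thesis
    using assms(3) by (simp add: rmod_def)
qed

lemma rmod_add_of_int_mult: "c \<noteq> 0 \<Longrightarrow> rmod (y + of_int k * c) c = rmod y c"
proof -
  assume "c \<noteq> 0"
  then have "\<lfloor>(y + of_int k * c) / c\<rfloor> = \<lfloor>y / c\<rfloor> + k"
    by (simp add: add_divide_distrib)
  then show ?thesis
    by (simp add: rmod_def algebra_simps)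
qed

lemma rmod_rmod_add: "c \<noteq> 0 \<Longrightarrow> rmod (rmod x c + y) c = rmod (x + y) c"
  using rmod_add_of_int_mult[of c "x + y" "- \<lfloor>x / c\<rfloor>"]
  by (simp add: rmod_def algebra_simps)

lemma rmod_minus_sum_rmod:
  assumes "c \<noteq> 0"
  shows "rmod (- (\<Sum>j\<in>J. rmod (f j) c)) c = rmod (- sum f J) c"
proof -
  have "- (\<Sum>j\<in>J. rmod (f j) c) = - sum f J + of_int (\<Sum>j\<in>J. \<lfloor>f j / c\<rfloor>) * c"
    by (simp add: rmod_def sum_subtractf sum_distrib_right)
  then show ?thesis
    by (simp only: rmod_add_of_int_mult[OF assms])
qed

abbreviation unif :: "real \<Rightarrow> real measure" where
  "unif c \<equiv> uniform_measure lborel {0..<c}"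

lemma sets_unif: "sets (unif c) = sets borel"
  by simp

lemma prob_space_unif: "c > 0 \<Longrightarrow> prob_space (unif c)"
  by (intro prob_space_uniform_measure) auto

lemma emeasure_lborel_vimage_isometry:
  assumes "\<bar>s\<bar> = 1" "B \<in> sets borel"
  shows "emeasure lborel ((\<lambda>x. t + s * x) -` B) = emeasure lborel (B :: real set)"
proof -
  have "lborel = distr lborel borel (\<lambda>x. t + s * x)"
    using lborel_real_affine[of s t] assms(1) by (simp add: density_1)
  then have "emeasure lborel B = emeasure (distr lborel borel (\<lambda>x. t + s * x)) B"
    by simp
  with assms(2) show ?thesis
    by (simp add: emeasure_distr)
qed

lemma distr_unif_eqI:
  assumes "c > 0" "f \<in> borel_measurable borel"
    and "\<And>A. A \<in> sets borel \<Longrightarrow>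
      emeasure lborel (f -` A \<inter> {0..<c}) = emeasure lborel (A \<inter> {0..<c})"
  shows "distr (unif c) (unif c) f = unif c"
proof (rule measure_eqI)
  fix A assume "A \<in> sets (distr (unif c) (unif c) f)"
  then have A: "A \<in> sets borel" by simp
  have "f -` A \<in> sets borel"
    using measurable_sets_borel[OF assms(2) A] .
  with A assms(2) show "emeasure (distr (unif c) (unif c) f) A = emeasure (unif c) A"
    by (simp add: emeasure_distr space_uniform_measure Int_commute[of "{0..<c}"] assms(3))
qed simp

lemma distr_unif_rmod_add:
  assumes c: "c > 0"
  shows "distr (unif c) (unif c) (\<lambda>u. rmod (t + u) c) = unif c"
proof -
  define s where "s = rmod t c"
  have s: "0 \<le> s" "s < c"
    using rmod_bounds[OF c] by (simp_all add: s_def)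
  have "rmod (t + u) c = rmod (s + u) c" for u
    using rmod_rmod_add[of c t u] c by (simp add: s_def)
  moreover have "rmod (s + u) c = (if s + u < c then s + u else s + u - c)"
    if "0 \<le> u" "u < c" for u
    using that s by (intro rmod_eqI[where k = "if s + u < c then 0 else 1"]) auto
  ultimately have split: "(\<lambda>u. rmod (t + u) c) -` A \<inter> {0..<c} =
      (\<lambda>u. s + 1 * u) -` (A \<inter> {s..<c}) \<union> (\<lambda>u. (s - c) + 1 * u) -` (A \<inter> {0..<s})" for A
    using s by (auto simp: algebra_simps split: if_splits)
  show ?thesis
  proof (rule distr_unif_eqI[OF c])
    fix A :: "real set" assume A: "A \<in> sets borel"
    have "emeasure lborel ((\<lambda>u. rmod (t + u) c) -` A \<inter> {0..<c})
        = emeasure lborel ((\<lambda>u. s + 1 * u) -` (A \<inter> {s..<c}))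
          + emeasure lborel ((\<lambda>u. (s - c) + 1 * u) -` (A \<inter> {0..<s}))"
      unfolding split using A by (intro plus_emeasure[symmetric]) auto
    also have "\<dots> = emeasure lborel (A \<inter> {s..<c}) + emeasure lborel (A \<inter> {0..<s})"
      by (subst (1 2) emeasure_lborel_vimage_isometry) (use A in auto)
    also have "\<dots> = emeasure lborel (A \<inter> {0..<c})"
      using A s by (subst plus_emeasure) (auto intro!: arg_cong[where f = "emeasure lborel"])
    finally show "emeasure lborel ((\<lambda>u. rmod (t + u) c) -` A \<inter> {0..<c})
        = emeasure lborel (A \<inter> {0..<c})" .
  qed simp
qed

lemma distr_unif_rmod_diff:
  assumes c: "c > 0"
  shows "distr (unif c) (unif c) (\<lambda>u. rmod (t - u) c) = unif c"
proof -
  define s where "s = rmod t c"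
  have s: "0 \<le> s" "s < c"
    using rmod_bounds[OF c] by (simp_all add: s_def)
  have "rmod (t - u) c = rmod (s - u) c" for u
    using rmod_rmod_add[of c t "- u"] c by (simp add: s_def)
  moreover have "rmod (s - u) c = (if u \<le> s then s - u else (s + c) - u)"
    if "0 \<le> u" "u < c" for u
    using that s by (intro rmod_eqI[where k = "if u \<le> s then 0 else -1"]) auto
  ultimately have split: "(\<lambda>u. rmod (t - u) c) -` A \<inter> {0..<c} =
      (\<lambda>u. s + (-1) * u) -` (A \<inter> {0..s}) \<union> (\<lambda>u. (s + c) + (-1) * u) -` (A \<inter> {s<..<c})" for A
    using s by (auto simp: algebra_simps split: if_splits)
  show ?thesis
  proof (rule distr_unif_eqI[OF c])
    fix A :: "real set" assume A: "A \<in> sets borel"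
    have "emeasure lborel ((\<lambda>u. rmod (t - u) c) -` A \<inter> {0..<c})
        = emeasure lborel ((\<lambda>u. s + (-1) * u) -` (A \<inter> {0..s}))
          + emeasure lborel ((\<lambda>u. (s + c) + (-1) * u) -` (A \<inter> {s<..<c}))"
      unfolding split using A by (intro plus_emeasure[symmetric]) auto
    also have "\<dots> = emeasure lborel (A \<inter> {0..s}) + emeasure lborel (A \<inter> {s<..<c})"
      by (subst (1 2) emeasure_lborel_vimage_isometry) (use A in auto)
    also have "\<dots> = emeasure lborel (A \<inter> {0..<c})"
      using A s by (subst plus_emeasure) (auto intro!: arg_cong[where f = "emeasure lborel"])
    finally show "emeasure lborel ((\<lambda>u. rmod (t - u) c) -` A \<inter> {0..<c})
        = emeasure lborel (A \<inter> {0..<c})" .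
  qed simp
qed

lemma distr_PiM_empty:
  assumes "prob_space M"
  shows "distr M (PiM {} N) (\<lambda>x. \<lambda>i\<in>{}. f i x) = PiM {} N'"
proof -
  have "(\<lambda>x. \<lambda>i\<in>{}. f i x) = (\<lambda>_. \<lambda>_. undefined)"
    by (simp add: fun_eq_iff)
  then show ?thesis
    by (auto simp: PiM_empty emeasure_distr prob_space.emeasure_space_1[OF assms]
        intro!: measure_eqI dest!: subset_singletonD)
qed

lemma (in prob_space) distr_PiM_of_indep_vars:
  assumes "indep_vars N X I" "\<And>i. i \<in> I \<Longrightarrow> distr M (N i) (X i) = K i"
  shows "distr M (PiM I K) (\<lambda>\<omega>. \<lambda>i\<in>I. X i \<omega>) = PiM I K"
proof (cases "I = {}")
  case True
  then show ?thesis
    by (simp only: distr_PiM_empty[OF prob_space_axioms])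
next
  case False
  have "distr M (PiM I K) (\<lambda>\<omega>. \<lambda>i\<in>I. X i \<omega>) = distr M (PiM I N) (\<lambda>\<omega>. \<lambda>i\<in>I. X i \<omega>)"
    using assms(2) by (intro distr_cong sets_PiM_cong) (auto simp flip: assms(2))
  also have "\<dots> = PiM I (\<lambda>i. distr M (N i) (X i))"
    using assms(1) indep_vars_iff_distr_eq_PiM'[OF False] unfolding indep_vars_def by blast
  also have "\<dots> = PiM I K"
    using assms(2) by (rule PiM_cong[OF refl])
  finally show ?thesis .
qed

lemma (in prob_space) distr_comp_indep_vars:
  assumes "indep_vars N X I" "\<And>i. i \<in> I \<Longrightarrow> distr M (N i) (X i) = K i"
    and F: "F \<in> measurable (PiM I K) L"
  shows "distr M L (\<lambda>\<omega>. F (\<lambda>i\<in>I. X i \<omega>)) = distr (PiM I K) L F"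
proof -
  have "X i \<in> measurable M (K i)" if "i \<in> I" for i
  proof -
    have "sets (K i) = sets (N i)"
      by (simp flip: assms(2)[OF that])
    from measurable_cong_sets[OF refl this] assms(1) that show ?thesis
      unfolding indep_vars_def by blast
  qed
  then have "(\<lambda>\<omega>. \<lambda>i\<in>I. X i \<omega>) \<in> measurable M (PiM I K)"
    by (rule measurable_restrict)
  from distr_distr[OF F this] show ?thesis
    by (simp add: distr_PiM_of_indep_vars[OF assms(1,2)] comp_def)
qed

lemma distr_pair_measure_fiberwise:
  assumes K: "prob_space K" and N: "prob_space N" and g: "g \<in> measurable N L"
    and f: "(\<lambda>(u, y). f y u) \<in> measurable (K \<Otimes>\<^sub>M N) K"
    and f_preserving: "\<And>y. y \<in> space N \<Longrightarrow> distr K K (f y) = K"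
  shows "distr (K \<Otimes>\<^sub>M N) (K \<Otimes>\<^sub>M L) (\<lambda>(u, y). (f y u, g y)) = K \<Otimes>\<^sub>M distr N L g"
proof (rule sym, rule pair_measure_eqI)
  interpret K: prob_space K by fact
  interpret N: prob_space N by fact
  interpret pair_sigma_finite K N ..
  show "sigma_finite_measure K" "sigma_finite_measure (distr N L g)"
    using K N.prob_space_distr[OF g] by (auto intro: prob_space_imp_sigma_finite)
  show "sets (K \<Otimes>\<^sub>M distr N L g) = sets (distr (K \<Otimes>\<^sub>M N) (K \<Otimes>\<^sub>M L) (\<lambda>(u, y). (f y u, g y)))"
    unfolding sets_distr by (rule sets_pair_measure_cong[OF refl sets_distr])
  let ?h = "\<lambda>(u, y). (f y u, g y)"
  have "(\<lambda>p. ((\<lambda>(u, y). f y u) p, g (snd p))) \<in> measurable (K \<Otimes>\<^sub>M N) (K \<Otimes>\<^sub>M L)"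
    by (intro measurable_Pair f measurable_compose[OF measurable_snd g])
  then have h: "?h \<in> measurable (K \<Otimes>\<^sub>M N) (K \<Otimes>\<^sub>M L)"
    by (simp add: case_prod_beta')
  fix A B assume A: "A \<in> sets K" and B: "B \<in> sets (distr N L g)"
  have fiber: "emeasure K ((\<lambda>u. (u, y)) -` (?h -` (A \<times> B) \<inter> space (K \<Otimes>\<^sub>M N)))
      = emeasure K A * indicator (g -` B \<inter> space N) y" if y: "y \<in> space N" for y
  proof -
    have "(\<lambda>u. (\<lambda>(u, y). f y u) (u, y)) \<in> measurable K K"
      by (rule measurable_compose[OF measurable_Pair2'[OF y] f])
    then have fy: "f y \<in> measurable K K"
      by simp
    have "(\<lambda>u. (u, y)) -` (?h -` (A \<times> B) \<inter> space (K \<Otimes>\<^sub>M N))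
        = (if g y \<in> B then f y -` A \<inter> space K else {})"
      using y by (auto simp: space_pair_measure)
    moreover have "emeasure K (f y -` A \<inter> space K) = emeasure (distr K K (f y)) A"
      using A by (rule emeasure_distr[OF fy, symmetric])
    ultimately show ?thesis
      using y f_preserving[OF y] by (simp split: split_indicator)
  qed
  have "emeasure (distr (K \<Otimes>\<^sub>M N) (K \<Otimes>\<^sub>M L) ?h) (A \<times> B)
      = (\<integral>\<^sup>+y. emeasure K ((\<lambda>u. (u, y)) -` (?h -` (A \<times> B) \<inter> space (K \<Otimes>\<^sub>M N))) \<partial>N)"
  proof -
    have "?h -` (A \<times> B) \<inter> space (K \<Otimes>\<^sub>M N) \<in> sets (K \<Otimes>\<^sub>M N)"
      using A B by (intro measurable_sets[OF h] pair_measureI) simp_all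
    then show ?thesis
      using A B by (simp add: emeasure_distr[OF h] emeasure_pair_measure_alt2)
  qed
  also have "\<dots> = (\<integral>\<^sup>+y. emeasure K A * indicator (g -` B \<inter> space N) y \<partial>N)"
    by (rule nn_integral_cong) (rule fiber)
  also have "\<dots> = emeasure K A * emeasure (distr N L g) B"
    using B g by (simp add: nn_integral_cmult_indicator emeasure_distr)
  finally show "emeasure K A * emeasure (distr N L g) B
      = emeasure (distr (K \<Otimes>\<^sub>M N) (K \<Otimes>\<^sub>M L) ?h) (A \<times> B)" ..
qed

lemma distr_PiM_insert_fiberwise:
  fixes K :: "'a measure"
  assumes K: "prob_space K"
    and \<Phi>: "\<Phi> \<in> measurable (PiM I (\<lambda>_. K)) (PiM J (\<lambda>_. K))"
      "distr (PiM I (\<lambda>_. K)) (PiM J (\<lambda>_. K)) \<Phi> = PiM J (\<lambda>_. K)"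
    and f: "(\<lambda>(u, y). f y u) \<in> measurable (K \<Otimes>\<^sub>M PiM I (\<lambda>_. K)) K"
      "\<And>y. y \<in> space (PiM I (\<lambda>_. K)) \<Longrightarrow> distr K K (f y) = K"
    and T: "T \<in> measurable (PiM (insert e I) (\<lambda>_. K)) (PiM (insert v J) (\<lambda>_. K))"
      "\<And>u y. u \<in> space K \<Longrightarrow> y \<in> space (PiM I (\<lambda>_. K)) \<Longrightarrow> T (y(e := u)) = (\<Phi> y)(v := f y u)"
  shows "distr (PiM (insert e I) (\<lambda>_. K)) (PiM (insert v J) (\<lambda>_. K)) T = PiM (insert v J) (\<lambda>_. K)"
proof -
  let ?P = "\<lambda>I. PiM I (\<lambda>_. K)"
  define insert_e where "insert_e = (\<lambda>(u, y). y(e := u) :: _ \<Rightarrow> 'a)"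
  define h where "h = (\<lambda>(u, y). (f y u, \<Phi> y))"
  define insert_v where "insert_v = (\<lambda>(u, z). z(v := u) :: _ \<Rightarrow> 'a)"
  have insert_e: "insert_e \<in> measurable (K \<Otimes>\<^sub>M ?P I) (?P (insert e I))"
    unfolding insert_e_def split_beta' by (rule measurable_fun_upd[where J = I]) auto
  have insert_v: "insert_v \<in> measurable (K \<Otimes>\<^sub>M ?P J) (?P (insert v J))"
    unfolding insert_v_def split_beta' by (rule measurable_fun_upd[where J = J]) auto
  have "(\<lambda>p. ((\<lambda>(u, y). f y u) p, \<Phi> (snd p))) \<in> measurable (K \<Otimes>\<^sub>M ?P I) (K \<Otimes>\<^sub>M ?P J)"
    by (intro measurable_Pair f(1) measurable_compose[OF measurable_snd \<Phi>(1)])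
  then have h: "h \<in> measurable (K \<Otimes>\<^sub>M ?P I) (K \<Otimes>\<^sub>M ?P J)"
    by (simp add: h_def case_prod_beta')
  have PiM_insert_e: "distr (K \<Otimes>\<^sub>M ?P I) (?P (insert e I)) insert_e = ?P (insert e I)"
    unfolding insert_e_def by (rule distr_pair_PiM_eq_PiM[of I "\<lambda>_. K" e]) (use K in auto)
  have PiM_insert_v: "distr (K \<Otimes>\<^sub>M ?P J) (?P (insert v J)) insert_v = ?P (insert v J)"
    unfolding insert_v_def by (rule distr_pair_PiM_eq_PiM[of J "\<lambda>_. K" v]) (use K in auto)
  have fiberwise: "distr (K \<Otimes>\<^sub>M ?P I) (K \<Otimes>\<^sub>M ?P J) h = K \<Otimes>\<^sub>M distr (?P I) (?P J) \<Phi>"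
    unfolding h_def by (rule distr_pair_measure_fiberwise[OF K prob_space_PiM[OF K] \<Phi>(1) f])
  have "distr (?P (insert e I)) (?P (insert v J)) T
      = distr (distr (K \<Otimes>\<^sub>M ?P I) (?P (insert e I)) insert_e) (?P (insert v J)) T"
    by (simp only: PiM_insert_e)
  also have "\<dots> = distr (K \<Otimes>\<^sub>M ?P I) (?P (insert v J)) (T \<circ> insert_e)"
    by (rule distr_distr[OF T(1) insert_e])
  also have "\<dots> = distr (K \<Otimes>\<^sub>M ?P I) (?P (insert v J)) (insert_v \<circ> h)"
  proof (rule distr_cong[OF refl refl], clarify)
    fix u y assume "(u, y) \<in> space (K \<Otimes>\<^sub>M ?P I)"
    then have "u \<in> space K" "y \<in> space (?P I)"
      by (simp_all only: space_pair_measure mem_Sigma_iff)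
    then show "(T \<circ> insert_e) (u, y) = (insert_v \<circ> h) (u, y)"
      using T(2) by (simp add: insert_e_def insert_v_def h_def)
  qed
  also have "\<dots> = distr (distr (K \<Otimes>\<^sub>M ?P I) (K \<Otimes>\<^sub>M ?P J) h) (?P (insert v J)) insert_v"
    by (rule distr_distr[OF insert_v h, symmetric])
  also have "\<dots> = ?P (insert v J)"
    unfolding fiberwise \<Phi>(2) by (rule PiM_insert_v)
  finally show ?thesis .
qed

text \<open>\<open>net_inflow E x\<close> is the vector \<open>B x\<close> for the incidence matrix \<open>B\<close> of \<open>E\<close>; loops cancel.\<close>

definition net_inflow :: "('a \<times> 'a) set \<Rightarrow> ('a \<times> 'a \<Rightarrow> real) \<Rightarrow> 'a \<Rightarrow> real" where
  "net_inflow E x i = (\<Sum>e\<in>E. (if snd e = i then x e else 0) - (if fst e = i then x e else 0))"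

lemma sum_in_edges:
  assumes "finite E"
  shows "(\<Sum>j\<in>{j. (j, i) \<in> E}. x (j, i)) = (\<Sum>e\<in>E. if snd e = i then x e else 0)"
proof -
  have "(\<Sum>j\<in>{j. (j, i) \<in> E}. x (j, i)) = sum x ((\<lambda>j. (j, i)) ` {j. (j, i) \<in> E})"
    by (simp add: sum.reindex inj_on_def)
  also have "(\<lambda>j. (j, i)) ` {j. (j, i) \<in> E} = {e \<in> E. snd e = i}"
    by force
  finally show ?thesis
    by (simp add: sum.inter_filter[OF assms])
qed

lemma sum_out_edges:
  assumes "finite E"
  shows "(\<Sum>j\<in>{j. (i, j) \<in> E}. x (i, j)) = (\<Sum>e\<in>E. if fst e = i then x e else 0)"
proof -
  have "(\<Sum>j\<in>{j. (i, j) \<in> E}. x (i, j)) = sum x (Pair i ` {j. (i, j) \<in> E})"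
    by (simp add: sum.reindex inj_on_def)
  also have "Pair i ` {j. (i, j) \<in> E} = {e \<in> E. fst e = i}"
    by force
  finally show ?thesis
    by (simp add: sum.inter_filter[OF assms])
qed

lemma tvec_eq_rmod_net_inflow: "finite E \<Longrightarrow> tvec E c x i = rmod (net_inflow E x i) c"
  by (simp add: tvec_def net_inflow_def sum_in_edges sum_out_edges sum_subtractf)

lemma net_inflow_cong: "(\<And>e. e \<in> E \<Longrightarrow> x e = y e) \<Longrightarrow> net_inflow E x i = net_inflow E y i"
  unfolding net_inflow_def by (intro sum.cong) auto

lemma net_inflow_insert_fun_upd:
  assumes "finite E" "e \<notin> E"
  shows "net_inflow (insert e E) (x(e := u)) i
    = net_inflow E x i + ((if snd e = i then u else 0) - (if fst e = i then u else 0))"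
proof -
  have "net_inflow E (x(e := u)) i = net_inflow E x i"
    using assms(2) by (intro net_inflow_cong) auto
  with assms show ?thesis
    unfolding net_inflow_def by simp
qed

lemma sum_net_inflow_eq_0:
  assumes "finite V" "E \<subseteq> V \<times> V"
  shows "(\<Sum>i\<in>V. net_inflow E x i) = 0"
proof -
  have "(\<Sum>i\<in>V. net_inflow E x i)
      = (\<Sum>e\<in>E. (\<Sum>i\<in>V. if snd e = i then x e else 0) - (\<Sum>i\<in>V. if fst e = i then x e else 0))"
    unfolding net_inflow_def by (subst sum.swap) (simp add: sum_subtractf)
  also have "\<dots> = 0"
    using assms by (intro sum.neutral) (auto simp: sum.delta)
  finally show ?thesis .
qed

lemma rmod_net_inflow_eq_minus_sum:
  assumes "c \<noteq> 0" "finite V" "E \<subseteq> V \<times> V" "\<rho> \<in> V"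
  shows "rmod (net_inflow E x \<rho>) c = rmod (- (\<Sum>i\<in>V - {\<rho>}. rmod (net_inflow E x i) c)) c"
proof -
  have "net_inflow E x \<rho> = - (\<Sum>i\<in>V - {\<rho>}. net_inflow E x i)"
    using sum_net_inflow_eq_0[OF assms(2,3), of x] sum.remove[OF assms(2,4), of "\<lambda>i. net_inflow E x i"]
    by simp
  then show ?thesis
    by (simp only: rmod_minus_sum_rmod[OF assms(1)])
qed

lemma borel_measurable_net_inflow:
  assumes "sets K = sets borel"
  shows "(\<lambda>x. net_inflow E x i) \<in> borel_measurable (PiM E (\<lambda>_. K))"
proof -
  have "(\<lambda>x. x e) \<in> borel_measurable (PiM E (\<lambda>_. K))" if "e \<in> E" for e
    using measurable_component_singleton[OF that, of "\<lambda>_. K"] measurable_cong_sets[OF refl assms]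
    by blast
  then show ?thesis
    unfolding net_inflow_def by (intro borel_measurable_sum borel_measurable_diff) auto
qed

lemma measurable_rmod_net_inflow:
  assumes "sets K = sets borel"
  shows "(\<lambda>x. rmod (net_inflow E x i) c) \<in> measurable (PiM E (\<lambda>_. K)) K"
  unfolding measurable_cong_sets[OF refl assms]
  by (intro borel_measurable_rmod borel_measurable_net_inflow assms)

text \<open>Equivalently: every vertex of \<open>S\<close> is joined by an undirected path to a vertex outside \<open>S\<close>.\<close>

definition anchored :: "('a \<times> 'a) set \<Rightarrow> 'a set \<Rightarrow> bool" where
  "anchored E S \<longleftrightarrow> (\<forall>K\<subseteq>S. K \<noteq> {} \<longrightarrow> (\<exists>e\<in>E. (fst e \<in> K) \<noteq> (snd e \<in> K)))"

lemma anchored_Diff: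
  assumes "anchored E S" "fst e \<notin> S - {v}" "snd e \<notin> S - {v}"
  shows "anchored (E - {e}) (S - {v})"
  unfolding anchored_def
proof (intro allI impI)
  fix K assume K: "K \<subseteq> S - {v}" "K \<noteq> {}"
  then obtain e' where "e' \<in> E" "(fst e' \<in> K) \<noteq> (snd e' \<in> K)"
    using assms(1) unfolding anchored_def by blast
  moreover have "e' \<noteq> e"
    using calculation(2) K(1) assms(2,3) by blast
  ultimately show "\<exists>e\<in>E - {e}. (fst e \<in> K) \<noteq> (snd e \<in> K)"
    by blast
qed

lemma anchored_exit_edge:
  assumes "anchored E S" "S \<noteq> {}"
  obtains e v where "e \<in> E" "v \<in> S" "fst e \<noteq> snd e" "v = fst e \<or> v = snd e"
    "fst e \<notin> S - {v}" "snd e \<notin> S - {v}" "anchored (E - {e}) (S - {v})"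
proof -
  obtain e where e: "e \<in> E" "(fst e \<in> S) \<noteq> (snd e \<in> S)"
    using assms unfolding anchored_def by blast
  define v where "v = (if fst e \<in> S then fst e else snd e)"
  have "v \<in> S" "fst e \<noteq> snd e" "v = fst e \<or> v = snd e" "fst e \<notin> S - {v}" "snd e \<notin> S - {v}"
    using e(2) by (auto simp: v_def)
  with e(1) anchored_Diff[OF assms(1)] show ?thesis
    using that by blast
qed

lemma undirected_connected_imp_anchored:
  assumes "undirected_connected V E" "\<rho> \<in> V"
  shows "anchored E (V - {\<rho>})"
  unfolding anchored_def
proof (intro allI impI)
  fix K assume K: "K \<subseteq> V - {\<rho>}" "K \<noteq> {}"
  show "\<exists>e\<in>E. (fst e \<in> K) \<noteq> (snd e \<in> K)"
  proof (rule ccontr)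
    assume closed: "\<not> ?thesis"
    obtain w where w: "w \<in> K"
      using K(2) by blast
    have "(\<rho>, w) \<in> (E \<union> E\<inverse>)\<^sup>*"
      using assms w K(1) unfolding undirected_connected_def by blast
    then have "w \<notin> K"
    proof (induction rule: rtrancl_induct)
      case base
      then show ?case using K(1) by blast
    next
      case (step y z)
      then show ?case using closed by fastforce
    qed
    with w show False
      by blast
  qed
qed

lemma distr_rmod_net_inflow_eq_PiM:
  assumes c: "c > 0" and "finite S" "finite E" "anchored E S"
  shows "distr (PiM E (\<lambda>_. unif c)) (PiM S (\<lambda>_. unif c)) (\<lambda>x. \<lambda>i\<in>S. rmod (net_inflow E x i) c)
    = PiM S (\<lambda>_. unif c)"
  using assms(2-4)
proof (induction S arbitrary: E rule: finite_remove_induct)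
  case empty
  show ?case
    by (rule distr_PiM_empty[OF prob_space_PiM[OF prob_space_unif[OF c]]])
next
  case (remove S)
  obtain e v where e: "e \<in> E" "v \<in> S" "fst e \<noteq> snd e" "v = fst e \<or> v = snd e"
    "fst e \<notin> S - {v}" "snd e \<notin> S - {v}" "anchored (E - {e}) (S - {v})"
    using anchored_exit_edge[OF remove.prems(2) \<open>S \<noteq> {}\<close>] .
  define E' where "E' = E - {e}"
  define S' where "S' = S - {v}"
  have E: "E = insert e E'" "e \<notin> E'" and S: "S = insert v S'" "fst e \<notin> S'" "snd e \<notin> S'"
    using e(1,2,5,6) by (auto simp: E'_def S'_def)
  have fin: "finite E'"
    using remove.prems(1) by (simp add: E'_def)
  define \<Phi> where "\<Phi> = (\<lambda>y. \<lambda>i\<in>S'. rmod (net_inflow E' y i) c)"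
  define f where "f = (\<lambda>y u. rmod (net_inflow E' y v + (if snd e = v then u else - u)) c)"
  have "distr (PiM (insert e E') (\<lambda>_. unif c)) (PiM (insert v S') (\<lambda>_. unif c))
      (\<lambda>x. \<lambda>i\<in>insert v S'. rmod (net_inflow (insert e E') x i) c) = PiM (insert v S') (\<lambda>_. unif c)"
  proof (rule distr_PiM_insert_fiberwise[OF prob_space_unif[OF c]])
    show "\<Phi> \<in> measurable (PiM E' (\<lambda>_. unif c)) (PiM S' (\<lambda>_. unif c))"
      unfolding \<Phi>_def by (intro measurable_restrict measurable_rmod_net_inflow) simp
    show "distr (PiM E' (\<lambda>_. unif c)) (PiM S' (\<lambda>_. unif c)) \<Phi> = PiM S' (\<lambda>_. unif c)"
      using remove.IH[OF e(2) fin] e(7) unfolding \<Phi>_def E'_def S'_def .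
    show "(\<lambda>(u, y). f y u) \<in> measurable (unif c \<Otimes>\<^sub>M PiM E' (\<lambda>_. unif c)) (unif c)"
      unfolding f_def measurable_cong_sets[OF refl sets_unif]
      using measurable_compose[OF measurable_snd borel_measurable_net_inflow[OF sets_unif]]
      by measurable
    show "distr (unif c) (unif c) (f y) = unif c" for y
      by (cases "snd e = v") (simp_all add: f_def distr_unif_rmod_add distr_unif_rmod_diff c)
    show "(\<lambda>x. \<lambda>i\<in>insert v S'. rmod (net_inflow (insert e E') x i) c)
        \<in> measurable (PiM (insert e E') (\<lambda>_. unif c)) (PiM (insert v S') (\<lambda>_. unif c))"
      by (intro measurable_restrict measurable_rmod_net_inflow) simp
    show "(\<lambda>i\<in>insert v S'. rmod (net_inflow (insert e E') (y(e := u)) i) c) = (\<Phi> y)(v := f y u)" for u y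
      using e(3,4) S(2,3) net_inflow_insert_fun_upd[OF fin E(2), of y u]
      by (auto simp: \<Phi>_def f_def fun_eq_iff)
  qed
  then show ?case
    by (simp only: E(1)[symmetric] S(1)[symmetric])
qed

lemma measurable_zero_sum_completion:
  assumes "sets K = sets borel"
  shows "(\<lambda>x. \<lambda>i\<in>{1..m}. if i < m then x i else rmod (- (\<Sum>j\<in>{1..<m}. x j)) c)
    \<in> measurable (PiM {1..<m} (\<lambda>_. K)) (PiM {1..m} (\<lambda>_. borel))"
proof (intro measurable_restrict)
  have coordinate: "(\<lambda>x. x j) \<in> borel_measurable (PiM {1..<m} (\<lambda>_. K))" if "j \<in> {1..<m}" for j
    using measurable_component_singleton[OF that, of "\<lambda>_. K"]
    by (simp only: measurable_cong_sets[OF refl assms])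
  then have "(\<lambda>x. rmod (- (\<Sum>j\<in>{1..<m}. x j)) c) \<in> borel_measurable (PiM {1..<m} (\<lambda>_. K))"
    by (intro borel_measurable_rmod borel_measurable_uminus borel_measurable_sum)
  with coordinate show "(\<lambda>x. if i < m then x i else rmod (- (\<Sum>j\<in>{1..<m}. x j)) c)
      \<in> borel_measurable (PiM {1..<m} (\<lambda>_. K))" if "i \<in> {1..m}" for i
    using that by (cases "i < m") simp_all
qed

lemma distr_rmod_net_inflow_eq_zero_sum_uniform:
  assumes c: "c > 0" and "m \<ge> 1" "E \<subseteq> {1..m} \<times> {1..m}" "undirected_connected {1..m} E"
  shows "distr (PiM E (\<lambda>_. unif c)) (PiM {1..m} (\<lambda>_. borel)) (\<lambda>x. \<lambda>i\<in>{1..m}. rmod (net_inflow E x i) c)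
    = zero_sum_uniform m c"
proof -
  have last: "{1..m} - {m} = {1..<m}"
    by auto
  define \<Phi> where "\<Phi> = (\<lambda>x. \<lambda>i\<in>{1..<m}. rmod (net_inflow E x i) c)"
  define \<Psi> where "\<Psi> = (\<lambda>x. \<lambda>i\<in>{1..m}. if i < m then x i else rmod (- (\<Sum>j\<in>{1..<m}. x j)) c)"
  have \<Phi>: "\<Phi> \<in> measurable (PiM E (\<lambda>_. unif c)) (PiM {1..<m} (\<lambda>_. unif c))"
    unfolding \<Phi>_def by (intro measurable_restrict measurable_rmod_net_inflow sets_unif)
  have "anchored E {1..<m}"
    using undirected_connected_imp_anchored[OF assms(4), of m] assms(2) unfolding last by simp
  then have \<Phi>_distr: "distr (PiM E (\<lambda>_. unif c)) (PiM {1..<m} (\<lambda>_. unif c)) \<Phi> = PiM {1..<m} (\<lambda>_. unif c)"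
    unfolding \<Phi>_def using assms(3) by (intro distr_rmod_net_inflow_eq_PiM c) (auto intro: finite_subset)
  have "(\<lambda>x. \<lambda>i\<in>{1..m}. rmod (net_inflow E x i) c) = \<Psi> \<circ> \<Phi>"
  proof (intro ext)
    fix x i
    have "rmod (net_inflow E x m) c = rmod (- (\<Sum>j\<in>{1..<m}. rmod (net_inflow E x j) c)) c"
      using rmod_net_inflow_eq_minus_sum[of c "{1..m}" E m x] c assms(2,3) unfolding last by simp
    then show "(\<lambda>i\<in>{1..m}. rmod (net_inflow E x i) c) i = (\<Psi> \<circ> \<Phi>) x i"
      by (auto simp: \<Psi>_def \<Phi>_def)
  qed
  then have "distr (PiM E (\<lambda>_. unif c)) (PiM {1..m} (\<lambda>_. borel)) (\<lambda>x. \<lambda>i\<in>{1..m}. rmod (net_inflow E x i) c)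
      = distr (PiM E (\<lambda>_. unif c)) (PiM {1..m} (\<lambda>_. borel)) (\<Psi> \<circ> \<Phi>)"
    by (simp only:)
  also have "\<dots> = distr (distr (PiM E (\<lambda>_. unif c)) (PiM {1..<m} (\<lambda>_. unif c)) \<Phi>) (PiM {1..m} (\<lambda>_. borel)) \<Psi>"
    unfolding \<Psi>_def by (rule distr_distr[OF measurable_zero_sum_completion[OF sets_unif] \<Phi>, symmetric])
  also have "\<dots> = zero_sum_uniform m c"
    unfolding \<Phi>_distr zero_sum_uniform_def \<Psi>_def ..
  finally show ?thesis .
qed

theorem lemma1:
  fixes M :: "'w measure" and m :: nat and a :: real
    and E :: "(nat \<times> nat) set" and r :: "nat \<times> nat \<Rightarrow> 'w \<Rightarrow> real"
  assumes "prob_space M"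
    and "m \<ge> 1" and "a > 0"
    and "E \<subseteq> {1..m} \<times> {1..m}"
    and "prob_space.indep_vars M (\<lambda>_. borel) r E"
    and "\<And>e. e \<in> E \<Longrightarrow> distr M lborel (r e) = uniform_measure lborel {0..<real m * a}"
    and "undirected_connected {1..m} E"
  shows "distr M (PiM {1..m} (\<lambda>_. borel))
           (\<lambda>\<omega>. \<lambda>i\<in>{1..m}. tvec E (real m * a) (\<lambda>e. r e \<omega>) i)
         = zero_sum_uniform m (real m * a)"
proof -
  interpret prob_space M by fact
  define c where "c = real m * a"
  define F where "F = (\<lambda>x. \<lambda>i\<in>{1..m}. rmod (net_inflow E x i) c)"
  have c: "c > 0"
    using assms(2,3) by (simp add: c_def)
  have "distr M borel (r e) = unif c" if "e \<in> E" for e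
    using assms(6)[OF that] by (simp add: c_def cong: distr_cong)
  moreover have "F \<in> measurable (PiM E (\<lambda>_. unif c)) (PiM {1..m} (\<lambda>_. borel))"
    unfolding F_def by (intro measurable_restrict borel_measurable_rmod borel_measurable_net_inflow sets_unif)
  ultimately have "distr M (PiM {1..m} (\<lambda>_. borel)) (\<lambda>\<omega>. F (\<lambda>e\<in>E. r e \<omega>))
      = distr (PiM E (\<lambda>_. unif c)) (PiM {1..m} (\<lambda>_. borel)) F"
    by (rule distr_comp_indep_vars[OF assms(5)])
  also have "\<dots> = zero_sum_uniform m c"
    unfolding F_def by (rule distr_rmod_net_inflow_eq_zero_sum_uniform[OF c assms(2,4,7)])
  also have "(\<lambda>\<omega>. F (\<lambda>e\<in>E. r e \<omega>)) = (\<lambda>\<omega>. \<lambda>i\<in>{1..m}. tvec E c (\<lambda>e. r e \<omega>) i)"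
    using finite_subset[OF assms(4)]
    by (auto simp: F_def tvec_eq_rmod_net_inflow fun_eq_iff cong: net_inflow_cong)
  finally show ?thesis
    unfolding c_def .
qed

end
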